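(* Let $G$ and $G'$ be isomorphic cographs such that, for each of them, the set of robust modules ordered by reverse inclusion has no least element. Suppose $G=\Sigma C$ and $G'=\Sigma C'$ where $C=(I,\le,\ell)$ and $C'=(I',\le',\ell')$ are reduced labelled chains. Then there are infinite initial segments $W$ of $I$ and $W'$ of $I'$ and an isomorphism of labelled chains from $C_{\restriction W}$ onto $C'_{\restriction W'}$.
   Context: Graphs are undirected and loopless; a cograph is a graph with no induced subgraph isomorphic to the path $P_4$. For a graph $G$ with vertex set $V$, a module is a set $A\subseteq V$ such that for all $a,a'\in A$ and $b\in V\setminus A$, $ab$ is an edge iff $a'b$ is an edge; a module $A$ is strong if every module is either comparable to $A$ under inclusion or disjoint from it; a module is robust if it is a singleton or the intersection of all strong modules containing $\{x,y\}$ for some distinct vertices $x,y$. A labelled chain is $C=(I,\le,\ell)$ with $(I,\le)$ a chain and $\ell(i)=(G_i,r(i))$, $G_i$ a non-empty cograph and $r(i)\in\{0,1\}$. Its sum $\Sigma C$ is the disjoint union of the $G_i$ in which vertices of the same $G_i$ are adjacent as in $G_i$, and $x\in G_i$, $y\in G_j$ with $i<j$ are adjacent iff $r(i)=1$. The direct sum of graphs is their disjoint union with no edges between them; the complete sum is their disjoint union with all edges between distinct summands. $C$ is reduced if $(I,\le)$ is infinite; in every interval of $I$ with at least two elements both values $0$ and $1$ of $r$ occur; if $r(i)=0$ then $G_i$ is not a complete sum of at least two non-empty graphs; if $r(i)=1$ then $G_i$ is not a direct sum of at least two non-empty graphs; and if $i$ is the largest element of $I$ then $G_i$ is a direct sum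 or a complete sum of at least two single-vertex graphs. For $W\subseteq I$, $C_{\restriction W}=(W,\le,\ell_{\restriction W})$. An isomorphism of labelled chains $(I,\le,\ell)\to(I',\le',\ell')$ is an order isomorphism $h$ such that $G_i$ is isomorphic to $G'_{h(i)}$ and $r(i)=r'(h(i))$ for all $i$. *)

theory Defs
  imports Main
begin

type_synonym 'a graph = "'a set \<times> ('a \<Rightarrow> 'a \<Rightarrow> bool)"

definition verts :: "'a graph \<Rightarrow> 'a set" where "verts G = fst G"
definition adj :: "'a graph \<Rightarrow> 'a \<Rightarrow> 'a \<Rightarrow> bool" where "adj G = snd G"

definition is_graph :: "'a graph \<Rightarrow> bool" where
  "is_graph G \<longleftrightarrow> (\<forall>x y. adj G x y \<longrightarrow> x \<in> verts G \<and> y \<in> verts G \<and> adj G y x \<and> x \<noteq> y)"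

definition cograph :: "'a graph \<Rightarrow> bool" where
  "cograph G \<longleftrightarrow> is_graph G \<and>
     \<not> (\<exists>a\<in>verts G. \<exists>b\<in>verts G. \<exists>c\<in>verts G. \<exists>d\<in>verts G.
          distinct [a,b,c,d] \<and> adj G a b \<and> adj G b c \<and> adj G c d \<and>
          \<not> adj G a c \<and> \<not> adj G b d \<and> \<not> adj G a d)"

definition graph_iso :: "'a graph \<Rightarrow> 'b graph \<Rightarrow> bool" where
  "graph_iso G H \<longleftrightarrow> (\<exists>f. bij_betw f (verts G) (verts H) \<and>
     (\<forall>x\<in>verts G. \<forall>y\<in>verts G. adj G x y \<longleftrightarrow> adj H (f x) (f y)))"

definition is_module :: "'a graph \<Rightarrow> 'a set \<Rightarrow> bool" where
  "is_module G A \<longleftrightarrow> A \<subseteq> verts G \<and>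
     (\<forall>a\<in>A. \<forall>a'\<in>A. \<forall>b\<in>verts G - A. adj G a b \<longleftrightarrow> adj G a' b)"

definition strong_module :: "'a graph \<Rightarrow> 'a set \<Rightarrow> bool" where
  "strong_module G A \<longleftrightarrow> is_module G A \<and>
     (\<forall>B. is_module G B \<longrightarrow> A \<subseteq> B \<or> B \<subseteq> A \<or> A \<inter> B = {})"

definition robust_module :: "'a graph \<Rightarrow> 'a set \<Rightarrow> bool" where
  "robust_module G A \<longleftrightarrow>
     (\<exists>x\<in>verts G. A = {x}) \<or>
     (\<exists>x\<in>verts G. \<exists>y\<in>verts G. x \<noteq> y \<and>
        A = \<Inter>{S. strong_module G S \<and> {x, y} \<subseteq> S})"

text \<open>The set of robust modules, ordered by reverse inclusion, has a least element,
  i.e. a robust module containing every robust module.\<close>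
definition robust_has_least :: "'a graph \<Rightarrow> bool" where
  "robust_has_least G \<longleftrightarrow>
     (\<exists>L. robust_module G L \<and> (\<forall>A. robust_module G A \<longrightarrow> A \<subseteq> L))"

text \<open>Decomposition of the vertex set into at least two non-empty blocks
  (the vertex sets of the summands).\<close>
definition vertex_partition :: "'a graph \<Rightarrow> 'a set set \<Rightarrow> bool" where
  "vertex_partition G P \<longleftrightarrow> \<Union>P = verts G \<and> {} \<notin> P \<and>
     (\<forall>X\<in>P. \<forall>Y\<in>P. X \<noteq> Y \<longrightarrow> X \<inter> Y = {}) \<and> (\<exists>X\<in>P. \<exists>Y\<in>P. X \<noteq> Y)"

definition direct_sum_decomp :: "'a graph \<Rightarrow> 'a set set \<Rightarrow> bool" where
  "direct_sum_decomp G P \<longleftrightarrow> vertex_partition G P \<and>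
     (\<forall>X\<in>P. \<forall>Y\<in>P. X \<noteq> Y \<longrightarrow> (\<forall>x\<in>X. \<forall>y\<in>Y. \<not> adj G x y))"

definition complete_sum_decomp :: "'a graph \<Rightarrow> 'a set set \<Rightarrow> bool" where
  "complete_sum_decomp G P \<longleftrightarrow> vertex_partition G P \<and>
     (\<forall>X\<in>P. \<forall>Y\<in>P. X \<noteq> Y \<longrightarrow> (\<forall>x\<in>X. \<forall>y\<in>Y. adj G x y))"

definition is_chain :: "'i set \<Rightarrow> ('i \<Rightarrow> 'i \<Rightarrow> bool) \<Rightarrow> bool" where
  "is_chain I le \<longleftrightarrow>
     (\<forall>i\<in>I. le i i) \<and>
     (\<forall>i\<in>I. \<forall>j\<in>I. le i j \<and> le j i \<longrightarrow> i = j) \<and>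
     (\<forall>i\<in>I. \<forall>j\<in>I. \<forall>k\<in>I. le i j \<and> le j k \<longrightarrow> le i k) \<and>
     (\<forall>i\<in>I. \<forall>j\<in>I. le i j \<or> le j i)"

text \<open>A labelled chain (I, le, l) with l i = (G i, r i); the value r i = True stands
  for 1 and r i = False for 0.\<close>
definition labelled_chain ::
    "'i set \<Rightarrow> ('i \<Rightarrow> 'i \<Rightarrow> bool) \<Rightarrow> ('i \<Rightarrow> 'v graph) \<Rightarrow> ('i \<Rightarrow> bool) \<Rightarrow> bool" where
  "labelled_chain I le G r \<longleftrightarrow> is_chain I le \<and>
     (\<forall>i\<in>I. cograph (G i) \<and> verts (G i) \<noteq> {})"

definition chain_sum ::
    "'i set \<Rightarrow> ('i \<Rightarrow> 'i \<Rightarrow> bool) \<Rightarrow> ('i \<Rightarrow> 'v graph) \<Rightarrow> ('i \<Rightarrow> bool) \<Rightarrow> ('i \<times> 'v) graph" where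
  "chain_sum I le G r =
     (Sigma I (\<lambda>i. verts (G i)),
      \<lambda>(i, x) (j, y). (i, x) \<in> Sigma I (\<lambda>i. verts (G i)) \<and> (j, y) \<in> Sigma I (\<lambda>i. verts (G i)) \<and>
         (if i = j then adj (G i) x y
          else if le i j then r i else r j))"

definition chain_interval :: "'i set \<Rightarrow> ('i \<Rightarrow> 'i \<Rightarrow> bool) \<Rightarrow> 'i set \<Rightarrow> bool" where
  "chain_interval I le J \<longleftrightarrow> J \<subseteq> I \<and>
     (\<forall>x\<in>J. \<forall>z\<in>J. \<forall>y\<in>I. le x y \<and> le y z \<longrightarrow> y \<in> J)"

definition reduced_chain ::
    "'i set \<Rightarrow> ('i \<Rightarrow> 'i \<Rightarrow> bool) \<Rightarrow> ('i \<Rightarrow> 'v graph) \<Rightarrow> ('i \<Rightarrow> bool) \<Rightarrow> bool" where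
  "reduced_chain I le G r \<longleftrightarrow>
     infinite I \<and>
     (\<forall>J. chain_interval I le J \<and> (\<exists>x\<in>J. \<exists>y\<in>J. x \<noteq> y) \<longrightarrow>
          (\<exists>x\<in>J. r x = False) \<and> (\<exists>x\<in>J. r x = True)) \<and>
     (\<forall>i\<in>I. r i = False \<longrightarrow> \<not> (\<exists>P. complete_sum_decomp (G i) P)) \<and>
     (\<forall>i\<in>I. r i = True \<longrightarrow> \<not> (\<exists>P. direct_sum_decomp (G i) P)) \<and>
     (\<forall>i\<in>I. (\<forall>j\<in>I. le j i) \<longrightarrow>
        (\<exists>P. (direct_sum_decomp (G i) P \<or> complete_sum_decomp (G i) P) \<and>
             (\<forall>X\<in>P. \<exists>x. X = {x})))"

definition initial_segment :: "'i set \<Rightarrow> ('i \<Rightarrow> 'i \<Rightarrow> bool) \<Rightarrow> 'i set \<Rightarrow> bool" where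
  "initial_segment I le W \<longleftrightarrow> W \<subseteq> I \<and> (\<forall>w\<in>W. \<forall>i\<in>I. le i w \<longrightarrow> i \<in> W)"

definition lchain_iso ::
    "'i set \<Rightarrow> ('i \<Rightarrow> 'i \<Rightarrow> bool) \<Rightarrow> ('i \<Rightarrow> 'v graph) \<Rightarrow> ('i \<Rightarrow> bool) \<Rightarrow>
     'j set \<Rightarrow> ('j \<Rightarrow> 'j \<Rightarrow> bool) \<Rightarrow> ('j \<Rightarrow> 'w graph) \<Rightarrow> ('j \<Rightarrow> bool) \<Rightarrow> ('i \<Rightarrow> 'j) \<Rightarrow> bool" where
  "lchain_iso W le G r W' le' G' r' h \<longleftrightarrow>
     bij_betw h W W' \<and>
     (\<forall>i\<in>W. \<forall>j\<in>W. le i j \<longleftrightarrow> le' (h i) (h j)) \<and>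
     (\<forall>i\<in>W. graph_iso (G i) (G' (h i)) \<and> r i = r' (h i))"

end

theory Submission
  imports Defs
begin

(* Let S be the sum of a reduced chain (I, le, G, r), and for k in I let U k be the union of the
   blocks G j with k <= j. Reducedness makes every U k a strong module of S, and U k is even robust
   when k is not the last index: it is the smallest strong module containing a vertex of G k and a
   vertex of a later block. Conversely, a robust module meeting G i lies inside G i or equals U k for
   some k <= i. Robust modules are preserved by isomorphisms, so if f : S -> S' is an isomorphism and
   neither chain has a least element, then far enough down the upsets correspond: there are k0, k0'
   and an order isomorphism sigma from {k <= k0} onto {k' <= k0'} with f (U k) = U' (sigma k).
   For k < k0, G k is U k minus the U j with k < j <= k0, so f maps G k onto G' (sigma k); hence
   these blocks are isomorphic, and their labels agree because r k is the adjacency between G k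
   and the later blocks. *)

section \<open>Graph isomorphisms and modules\<close>

definition graph_isomorphism :: "('a \<Rightarrow> 'b) \<Rightarrow> 'a graph \<Rightarrow> 'b graph \<Rightarrow> bool" where
  "graph_isomorphism f G H \<longleftrightarrow> bij_betw f (verts G) (verts H) \<and>
     (\<forall>x\<in>verts G. \<forall>y\<in>verts G. adj G x y \<longleftrightarrow> adj H (f x) (f y))"

lemma graph_iso_iff_isomorphism: "graph_iso G H \<longleftrightarrow> (\<exists>f. graph_isomorphism f G H)"
  unfolding graph_iso_def graph_isomorphism_def by blast

lemma graph_isomorphism_bij: "graph_isomorphism f G H \<Longrightarrow> bij_betw f (verts G) (verts H)"
  unfolding graph_isomorphism_def by blast

lemma graph_isomorphism_image_inv_into:
  "graph_isomorphism f G H \<Longrightarrow> X \<subseteq> verts H \<Longrightarrow> f ` (inv_into (verts G) f ` X) = X"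
  using graph_isomorphism_bij by (metis bij_betw_def image_inv_into_cancel)

lemma graph_isomorphism_inv:
  assumes "graph_isomorphism f G H"
  shows "graph_isomorphism (inv_into (verts G) f) H G"
proof -
  have bij: "bij_betw f (verts G) (verts H)"
    and adj: "\<forall>x\<in>verts G. \<forall>y\<in>verts G. adj G x y \<longleftrightarrow> adj H (f x) (f y)"
    using assms unfolding graph_isomorphism_def by auto
  have "adj H x y \<longleftrightarrow> adj G (inv_into (verts G) f x) (inv_into (verts G) f y)"
    if "x \<in> verts H" "y \<in> verts H" for x y
    using that adj bij bij_betw_inv_into_right[OF bij] bij_betwE[OF bij_betw_inv_into[OF bij]]
    by metis
  then show ?thesis
    using bij_betw_inv_into[OF bij] unfolding graph_isomorphism_def by blast
qed

lemma graph_isomorphism_comp: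
  assumes "graph_isomorphism f G H" and "graph_isomorphism g H K"
  shows "graph_isomorphism (g \<circ> f) G K"
  using assms bij_betw_trans bij_betwE unfolding graph_isomorphism_def comp_def by metis

lemma is_module_adj_eq:
  "is_module G M \<Longrightarrow> a \<in> M \<Longrightarrow> a' \<in> M \<Longrightarrow> b \<in> verts G \<Longrightarrow> b \<notin> M \<Longrightarrow> adj G a b = adj G a' b"
  unfolding is_module_def by blast

lemma is_module_subset_verts: "is_module G A \<Longrightarrow> A \<subseteq> verts G"
  unfolding is_module_def by blast

lemma strong_module_subset_verts: "strong_module G A \<Longrightarrow> A \<subseteq> verts G"
  unfolding strong_module_def is_module_def by blast

lemma strong_module_verts: "strong_module G (verts G)"
  unfolding strong_module_def is_module_def by auto

lemma robust_module_subset_verts: "robust_module G A \<Longrightarrow> A \<subseteq> verts G"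
  unfolding robust_module_def using strong_module_verts by blast

lemma is_module_image:
  assumes f: "graph_isomorphism f G H" and A: "is_module G A"
  shows "is_module H (f ` A)"
proof -
  have adj: "\<forall>x\<in>verts G. \<forall>y\<in>verts G. adj G x y \<longleftrightarrow> adj H (f x) (f y)"
    using f unfolding graph_isomorphism_def by auto
  have sub: "A \<subseteq> verts G" using A by (rule is_module_subset_verts)
  have "adj H (f a) (f b) \<longleftrightarrow> adj H (f a') (f b)"
    if "a \<in> A" "a' \<in> A" "b \<in> verts G" "f b \<notin> f ` A" for a a' b
    using that is_module_adj_eq[OF A] sub adj by (metis image_eqI subsetD)
  moreover have "verts H = f ` verts G"
    using graph_isomorphism_bij[OF f] by (simp add: bij_betw_def)
  ultimately show ?thesis
    using sub unfolding is_module_def by (auto 4 3)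
qed

lemma strong_module_image:
  assumes f: "graph_isomorphism f G H" and A: "strong_module G A"
  shows "strong_module H (f ` A)"
  unfolding strong_module_def
proof (intro conjI allI impI)
  show "is_module H (f ` A)"
    using is_module_image[OF f] A unfolding strong_module_def by blast
  fix B assume B: "is_module H B"
  let ?g = "inv_into (verts G) f"
  have gB: "is_module G (?g ` B)" using is_module_image[OF graph_isomorphism_inv[OF f] B] .
  have fgB: "f ` (?g ` B) = B"
    using graph_isomorphism_image_inv_into[OF f is_module_subset_verts[OF B]] .
  have "f ` (A \<inter> ?g ` B) = f ` A \<inter> B"
    using graph_isomorphism_bij[OF f] strong_module_subset_verts[OF A] is_module_subset_verts[OF gB] fgB
    by (metis bij_betw_imp_inj_on inj_on_image_Int)
  moreover have "A \<subseteq> ?g ` B \<or> ?g ` B \<subseteq> A \<or> A \<inter> ?g ` B = {}"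
    using A gB unfolding strong_module_def by blast
  ultimately show "f ` A \<subseteq> B \<or> B \<subseteq> f ` A \<or> f ` A \<inter> B = {}"
    using image_mono[of A "?g ` B" f] image_mono[of "?g ` B" A f] unfolding fgB by blast
qed

lemma strong_modules_image:
  assumes f: "graph_isomorphism f G H" and X: "X \<subseteq> verts G"
  shows "{S. strong_module H S \<and> f ` X \<subseteq> S} = (\<lambda>S. f ` S) ` {S. strong_module G S \<and> X \<subseteq> S}"
proof -
  let ?g = "inv_into (verts G) f"
  have "S \<in> (\<lambda>S. f ` S) ` {S. strong_module G S \<and> X \<subseteq> S}"
    if S: "strong_module H S" "f ` X \<subseteq> S" for S
  proof (rule image_eqI)
    show "S = f ` (?g ` S)"
      using graph_isomorphism_image_inv_into[OF f strong_module_subset_verts[OF S(1)]] by simp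
    have "X = ?g ` f ` X"
      using X graph_isomorphism_bij[OF f] by (simp add: bij_betw_def inv_into_image_cancel)
    also have "\<dots> \<subseteq> ?g ` S"
      using S(2) by (rule image_mono)
    finally have "X \<subseteq> ?g ` S" .
    then show "?g ` S \<in> {S. strong_module G S \<and> X \<subseteq> S}"
      using strong_module_image[OF graph_isomorphism_inv[OF f] S(1)] by blast
  qed
  then show ?thesis
    using strong_module_image[OF f] image_mono by blast
qed

lemma robust_module_image:
  assumes f: "graph_isomorphism f G H" and R: "robust_module G R"
  shows "robust_module H (f ` R)"
proof -
  have bij: "bij_betw f (verts G) (verts H)" using graph_isomorphism_bij[OF f] .
  from R consider x where "x \<in> verts G" "R = {x}"
    | x y where "x \<in> verts G" "y \<in> verts G" "x \<noteq> y"
        "R = \<Inter>{S. strong_module G S \<and> {x, y} \<subseteq> S}"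
    unfolding robust_module_def by blast
  then show ?thesis
  proof cases
    case 1
    then show ?thesis using bij bij_betwE unfolding robust_module_def by fastforce
  next
    case (2 x y)
    let ?F = "{S. strong_module G S \<and> {x, y} \<subseteq> S}"
    have "inj_on f (verts G)" using bij by (rule bij_betw_imp_inj_on)
    moreover have "\<forall>S\<in>?F. S \<subseteq> verts G" using strong_module_subset_verts by blast
    moreover have "verts G \<in> ?F" using 2 strong_module_verts by blast
    ultimately have "f ` R = (\<Inter>S\<in>?F. f ` S)"
      using image_INT[of f "verts G" ?F "\<lambda>S. S"] 2 by simp
    also have "\<dots> = \<Inter>{S. strong_module H S \<and> {f x, f y} \<subseteq> S}"
      using strong_modules_image[OF f, of "{x, y}"] 2 by simp
    finally have "f ` R = \<Inter>{S. strong_module H S \<and> {f x, f y} \<subseteq> S}" .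
    moreover have "f x \<in> verts H" "f y \<in> verts H" "f x \<noteq> f y"
      using 2 bij by (auto simp: bij_betw_def inj_on_def)
    ultimately show ?thesis
      unfolding robust_module_def by blast
  qed
qed

lemma robust_has_least_image:
  assumes f: "graph_isomorphism f G H" and least: "robust_has_least G"
  shows "robust_has_least H"
proof -
  let ?g = "inv_into (verts G) f"
  obtain L where L: "robust_module G L" "\<forall>A. robust_module G A \<longrightarrow> A \<subseteq> L"
    using least unfolding robust_has_least_def by blast
  have "A \<subseteq> f ` L" if A: "robust_module H A" for A
  proof -
    have "A = f ` (?g ` A)"
      using graph_isomorphism_image_inv_into[OF f robust_module_subset_verts[OF A]] by simp
    also have "\<dots> \<subseteq> f ` L"
      using L robust_module_image[OF graph_isomorphism_inv[OF f] A] by (blast intro: image_mono)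
    finally show ?thesis .
  qed
  then show ?thesis
    unfolding robust_has_least_def using robust_module_image[OF f L(1)] by blast
qed

section \<open>Sums of reduced chains\<close>

locale reduced_lchain =
  fixes I :: "'i set" and le :: "'i \<Rightarrow> 'i \<Rightarrow> bool" and G :: "'i \<Rightarrow> 'v graph" and r :: "'i \<Rightarrow> bool"
  assumes labelled: "labelled_chain I le G r" and reduced: "reduced_chain I le G r"
begin

abbreviation S :: "('i \<times> 'v) graph" where "S \<equiv> chain_sum I le G r"

abbreviation lt :: "'i \<Rightarrow> 'i \<Rightarrow> bool" where "lt i j \<equiv> le i j \<and> i \<noteq> j"

definition block :: "'i \<Rightarrow> ('i \<times> 'v) set" where
  "block k = {z \<in> verts S. fst z = k}"

definition upset :: "'i \<Rightarrow> ('i \<times> 'v) set" where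
  "upset k = {z \<in> verts S. le k (fst z)}"

definition strict_upset :: "'i \<Rightarrow> ('i \<times> 'v) set" where
  "strict_upset k = {z \<in> verts S. lt k (fst z)}"

lemma chain_refl: "i \<in> I \<Longrightarrow> le i i"
  and chain_antisym: "i \<in> I \<Longrightarrow> j \<in> I \<Longrightarrow> le i j \<Longrightarrow> le j i \<Longrightarrow> i = j"
  and chain_trans: "i \<in> I \<Longrightarrow> j \<in> I \<Longrightarrow> k \<in> I \<Longrightarrow> le i j \<Longrightarrow> le j k \<Longrightarrow> le i k"
  and chain_total: "i \<in> I \<Longrightarrow> j \<in> I \<Longrightarrow> le i j \<or> le j i"
  using labelled unfolding labelled_chain_def is_chain_def by blast+

lemma chain_less_le_trans: "i \<in> I \<Longrightarrow> j \<in> I \<Longrightarrow> k \<in> I \<Longrightarrow> lt i j \<Longrightarrow> le j k \<Longrightarrow> lt i k"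
  and chain_le_less_trans: "i \<in> I \<Longrightarrow> j \<in> I \<Longrightarrow> k \<in> I \<Longrightarrow> le i j \<Longrightarrow> lt j k \<Longrightarrow> lt i k"
  using chain_trans[of i j k] chain_antisym[of i j] chain_antisym[of j k] by blast+

lemma infinite_index: "infinite I"
  using reduced unfolding reduced_chain_def by blast

lemma mem_verts_S: "(i, x) \<in> verts S \<longleftrightarrow> i \<in> I \<and> x \<in> verts (G i)"
  unfolding chain_sum_def verts_def by simp

lemma fst_mem_verts_S: "z \<in> verts S \<Longrightarrow> fst z \<in> I"
  by (cases z) (simp add: mem_verts_S)

lemma block_vertex:
  assumes "p \<in> I" obtains e where "(p, e) \<in> verts S"
  using labelled assms unfolding labelled_chain_def by (auto simp: mem_verts_S)

lemma adj_S: "adj S (i, x) (j, y) \<longleftrightarrow> (i, x) \<in> verts S \<and> (j, y) \<in> verts S \<and>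
    (if i = j then adj (G i) x y else if le i j then r i else r j)"
  unfolding chain_sum_def adj_def verts_def by simp

lemma adj_S_less:
  "(i, x) \<in> verts S \<Longrightarrow> (j, y) \<in> verts S \<Longrightarrow> lt i j \<Longrightarrow> adj S (i, x) (j, y) = r i"
  by (simp add: adj_S)

lemma adj_S_greater:
  "(i, x) \<in> verts S \<Longrightarrow> (j, y) \<in> verts S \<Longrightarrow> lt j i \<Longrightarrow> adj S (i, x) (j, y) = r j"
  using chain_antisym by (auto simp: adj_S mem_verts_S)

lemma adj_S_same_block:
  "(i, x) \<in> verts S \<Longrightarrow> (i, y) \<in> verts S \<Longrightarrow> adj S (i, x) (i, y) = adj (G i) x y"
  by (simp add: adj_S)

lemma block_graph_adj_sym: "i \<in> I \<Longrightarrow> adj (G i) x y = adj (G i) y x"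
  using labelled unfolding labelled_chain_def cograph_def is_graph_def by blast

lemma adj_S_sym: "adj S u w = adj S w u"
proof (cases u, cases w)
  fix i x j y assume uw: "u = (i, x)" "w = (j, y)"
  show ?thesis
  proof (cases "i = j")
    case True
    then show ?thesis using uw block_graph_adj_sym by (auto simp: adj_S mem_verts_S)
  next
    case False
    then show ?thesis
      using uw chain_antisym[of i j] chain_total[of i j] by (auto simp: adj_S mem_verts_S)
  qed
qed

lemma reduced_interval:
  "chain_interval I le J \<Longrightarrow> x \<in> J \<Longrightarrow> y \<in> J \<Longrightarrow> x \<noteq> y \<Longrightarrow> (\<exists>p\<in>J. \<not> r p) \<and> (\<exists>p\<in>J. r p)"
  using reduced unfolding reduced_chain_def by (elim conjE allE impE) auto

lemma reduced_not_complete_sum: "i \<in> I \<Longrightarrow> \<not> r i \<Longrightarrow> \<not> complete_sum_decomp (G i) P"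
  using reduced unfolding reduced_chain_def by (elim conjE) blast

lemma reduced_not_direct_sum: "i \<in> I \<Longrightarrow> r i \<Longrightarrow> \<not> direct_sum_decomp (G i) P"
  using reduced unfolding reduced_chain_def by (elim conjE) blast

lemma reduced_last_block:
  "i \<in> I \<Longrightarrow> \<forall>j\<in>I. le j i \<Longrightarrow> \<exists>P. (direct_sum_decomp (G i) P \<or> complete_sum_decomp (G i) P) \<and>
     (\<forall>X\<in>P. \<exists>x. X = {x})"
  using reduced unfolding reduced_chain_def by (elim conjE) blast

lemma label_changes_in_interval:
  assumes "i \<in> I" "k \<in> I" "lt i k"
  obtains p where "p \<in> I" "le i p" "le p k" "r p \<noteq> r i"
proof -
  let ?J = "{m \<in> I. le i m \<and> le m k}"
  have "chain_interval I le ?J"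
    unfolding chain_interval_def using chain_trans assms by blast
  moreover have "i \<in> ?J" "k \<in> ?J" using assms chain_refl by auto
  ultimately have "(\<exists>p\<in>?J. \<not> r p) \<and> (\<exists>p\<in>?J. r p)"
    using reduced_interval assms(3) by blast
  then show thesis using that by (cases "r i") auto
qed

lemma adj_last_block:
  assumes "j \<in> I" "\<forall>q\<in>I. le q j" "x \<in> verts (G j)" "y \<in> verts (G j)" "x \<noteq> y"
  shows "adj (G j) x y = r j"
proof -
  obtain P where P: "direct_sum_decomp (G j) P \<or> complete_sum_decomp (G j) P"
    and singletons: "\<forall>X\<in>P. \<exists>x. X = {x}"
    using reduced_last_block assms(1,2) by blast
  then have "\<Union>P = verts (G j)"
    unfolding direct_sum_decomp_def complete_sum_decomp_def vertex_partition_def by blast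
  then have blocks: "{x} \<in> P" "{y} \<in> P" "{x} \<noteq> {y}"
    using assms(3-5) singletons by (metis UnionE singletonD singleton_inject)+
  show ?thesis
  proof (cases "r j")
    case True
    then have "complete_sum_decomp (G j) P" using P reduced_not_direct_sum assms(1) by blast
    then show ?thesis using True blocks unfolding complete_sum_decomp_def by blast
  next
    case False
    then have "direct_sum_decomp (G j) P" using P reduced_not_complete_sum assms(1) by blast
    then show ?thesis using False blocks unfolding direct_sum_decomp_def by blast
  qed
qed

lemma module_contains_block:
  assumes M: "is_module S M" and ix: "(i, x) \<in> M" and jy: "(j, y) \<in> M"
    and ij: "lt i j" and labels: "r j \<noteq> r i"
  shows "block j \<subseteq> M"
proof
  fix z assume "z \<in> block j"
  then obtain c where z: "z = (j, c)" "(j, c) \<in> verts S"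
    unfolding block_def by (cases z) auto
  have V: "(i, x) \<in> verts S" "(j, y) \<in> verts S"
    using M ix jy is_module_subset_verts by blast+
  have I: "i \<in> I" "j \<in> I" using V by (simp_all add: mem_verts_S)
  show "z \<in> M"
  proof (rule ccontr)
    assume "z \<notin> M"
    then have uniform: "adj S w (j, c) = r i" if "w \<in> M" for w
      using is_module_adj_eq[OF M that ix] z adj_S_less[OF V(1) z(2) ij] by simp
    show False
    proof (cases "\<exists>q\<in>I. lt j q")
      case True
      then obtain q e where q: "lt j q" "(q, e) \<in> verts S" using block_vertex by metis
      have "q \<in> I" using q(2) by (simp add: mem_verts_S)
      then have "lt i q" using chain_less_le_trans q(1) ij I by blast
      then have "adj S (i, x) (q, e) \<noteq> adj S (j, y) (q, e)"
        using adj_S_less V q labels by simp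
      then have "(q, e) \<in> M" using is_module_adj_eq[OF M ix jy] q(2) by blast
      then show False using uniform adj_S_greater[OF q(2) z(2) q(1)] labels by simp
    next
      case False
      then have "\<forall>q\<in>I. le q j" using chain_total I(2) by blast
      moreover have "y \<noteq> c" using \<open>z \<notin> M\<close> jy z by auto
      ultimately have "adj S (j, y) (j, c) = r j"
        using adj_S_same_block V z adj_last_block I(2) by (simp add: mem_verts_S)
      then show False using uniform[OF jy] labels by simp
    qed
  qed
qed

lemma module_contains_label_change:
  assumes M: "is_module S M" and ix: "(i, x) \<in> M" and jy: "(j, y) \<in> M"
    and p: "(p, e) \<in> verts S" "lt i p" "lt p j" "r p \<noteq> r i"
  shows "(p, e) \<in> M"
proof -
  have V: "(i, x) \<in> verts S" "(j, y) \<in> verts S"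
    using M ix jy is_module_subset_verts by blast+
  then have "adj S (i, x) (p, e) \<noteq> adj S (j, y) (p, e)"
    using adj_S_less[OF V(1) p(1,2)] adj_S_greater[OF V(2) p(1,3)] p(4) by simp
  then show ?thesis using is_module_adj_eq[OF M ix jy p(1)] by blast
qed

lemma module_contains_strict_upset:
  assumes M: "is_module S M" and ix: "(i, x) \<in> M" and jy: "(j, y) \<in> M" and ij: "lt i j"
  shows "strict_upset i \<subseteq> M"
proof
  fix z assume "z \<in> strict_upset i"
  then obtain k c where z: "z = (k, c)" "(k, c) \<in> verts S" "lt i k"
    unfolding strict_upset_def by (cases z) auto
  have V: "(i, x) \<in> verts S" "(j, y) \<in> verts S"
    using M ix jy is_module_subset_verts by blast+
  have I: "i \<in> I" "j \<in> I" "k \<in> I" using V z(2) by (simp_all add: mem_verts_S)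
  show "z \<in> M"
  proof (rule ccontr)
    assume "z \<notin> M"
    then have uniform: "adj S w (k, c) = r i" if "w \<in> M" for w
      using is_module_adj_eq[OF M that ix] z adj_S_less[OF V(1) z(2) z(3)] by simp
    define m where "m = (if le k j then k else j)"
    have m: "m \<in> I" "lt i m" "le m j" "le m k"
      using I ij z(3) chain_total[of k j] chain_refl unfolding m_def by auto
    obtain q where q: "q \<in> I" "le i q" "le q m" "r q \<noteq> r i"
      using label_changes_in_interval I(1) m(1,2) by blast
    have qjk: "lt i q" "le q j" "le q k"
      using q m I chain_trans[of q m j] chain_trans[of q m k] by auto
    consider "q = j" "q = k" | "q = k" "q \<noteq> j" | "q = j" "q \<noteq> k" | "q \<noteq> j" "q \<noteq> k" by blast
    then show False
    proof cases
      case 1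
      then have "block j \<subseteq> M" using module_contains_block M ix jy ij q(4) by blast
      then show False using \<open>z \<notin> M\<close> z 1 unfolding block_def by auto
    next
      case 2
      then show False using uniform[OF jy] adj_S_greater[OF V(2) z(2)] qjk q(4) by simp
    next
      case 3
      then show False using uniform[OF jy] adj_S_less[OF V(2) z(2)] qjk q(4) by simp
    next
      case 4
      obtain e where e: "(q, e) \<in> verts S" using block_vertex[OF q(1)] .
      then have "(q, e) \<in> M" using module_contains_label_change[OF M ix jy] qjk q(4) 4 by blast
      then show False using uniform adj_S_less[OF e z(2)] qjk q(4) 4 by simp
    qed
  qed
qed

lemma upset_subset_verts: "upset k \<subseteq> verts S"
  unfolding upset_def by blast

lemma mem_upset: "(i, x) \<in> upset k \<longleftrightarrow> (i, x) \<in> verts S \<and> le k i"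
  unfolding upset_def by simp

lemma upset_eq_block_Un_strict_upset: "k \<in> I \<Longrightarrow> upset k = block k \<union> strict_upset k"
  unfolding upset_def block_def strict_upset_def using chain_refl by auto

lemma upset_subset_strict_upset: "p \<in> I \<Longrightarrow> k \<in> I \<Longrightarrow> lt p k \<Longrightarrow> upset k \<subseteq> strict_upset p"
  unfolding upset_def strict_upset_def using chain_less_le_trans fst_mem_verts_S by blast

lemma upset_module: "k \<in> I \<Longrightarrow> is_module S (upset k)"
  unfolding is_module_def
proof (intro conjI ballI upset_subset_verts)
  fix a a' b assume k: "k \<in> I" and "a \<in> upset k" "a' \<in> upset k" and b: "b \<in> verts S - upset k"
  have "adj S u b = r (fst b)" if u: "u \<in> upset k" for u
  proof -
    have "fst b \<in> I" "fst u \<in> I" using b u fst_mem_verts_S upset_subset_verts by blast+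
    then have "lt (fst b) (fst u)"
      using b u k chain_total[of k "fst b"] chain_le_less_trans[of "fst b" k "fst u"]
      unfolding upset_def by auto
    moreover have "u \<in> verts S" "b \<in> verts S" using u b upset_subset_verts by blast+
    ultimately show ?thesis using adj_S_greater[of "fst u" "snd u" "fst b" "snd b"] by simp
  qed
  then show "adj S a b = adj S a' b" using \<open>a \<in> upset k\<close> \<open>a' \<in> upset k\<close> by simp
qed

lemma upset_strong_module: "k \<in> I \<Longrightarrow> strong_module S (upset k)"
  unfolding strong_module_def
proof (intro conjI allI impI upset_module)
  fix M assume k: "k \<in> I" and M: "is_module S M"
  show "upset k \<subseteq> M \<or> M \<subseteq> upset k \<or> upset k \<inter> M = {}"
  proof (rule ccontr)
    assume incomparable: "\<not> ?thesis"
    then obtain p e q y where pe: "(p, e) \<in> M" "(p, e) \<notin> upset k"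
      and qy: "(q, y) \<in> M" "(q, y) \<in> upset k" by auto
    have V: "(p, e) \<in> verts S" "(q, y) \<in> verts S" using pe qy M is_module_subset_verts by blast+
    then have I: "p \<in> I" "q \<in> I" by (simp_all add: mem_verts_S)
    have "lt p k" using V pe k I chain_total[of p k] chain_refl[of k] by (auto simp: mem_upset)
    then have "upset k \<subseteq> strict_upset p" using upset_subset_strict_upset I k by blast
    moreover have "lt p q" using \<open>lt p k\<close> qy I k chain_less_le_trans[of p k q] by (simp add: mem_upset)
    then have "strict_upset p \<subseteq> M" using module_contains_strict_upset M pe qy by blast
    ultimately show False using incomparable by blast
  qed
qed

lemma module_block_part_Un_strict_upset:
  assumes T: "is_module S T" and qy: "(q, y) \<in> T" and p: "p \<in> I" and pq: "lt p q"
  shows "is_module S ((block p - T) \<union> strict_upset p)" (is "is_module S ?T'")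
proof -
  have V: "(q, y) \<in> verts S" using T qy is_module_subset_verts by blast
  have I: "p \<in> I" "q \<in> I" using V p by (auto simp: mem_verts_S)
  have adj_val: "adj S (j, v) (k, e) = r k"
    if a: "(j, v) \<in> ?T'" and b: "(k, e) \<in> verts S" "(k, e) \<notin> ?T'" for j v k e
  proof -
    have Va: "(j, v) \<in> verts S" and pj: "le p j" and k: "k \<in> I"
      using a b chain_refl[OF p] unfolding block_def strict_upset_def by (auto simp: mem_verts_S)
    show ?thesis
    proof (cases "k = p")
      case True
      then have "(k, e) \<in> T" using b unfolding block_def strict_upset_def by auto
      show ?thesis
      proof (cases "j = p")
        case True
        then have "(j, v) \<notin> T" using a unfolding strict_upset_def by auto
        then have "adj S (k, e) (j, v) = adj S (q, y) (j, v)"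
          using is_module_adj_eq[OF T \<open>(k, e) \<in> T\<close> qy Va] by blast
        also have "\<dots> = r p" using adj_S_greater[OF V Va] pq True by simp
        finally show ?thesis using adj_S_sym[of "(k, e)" "(j, v)"] \<open>k = p\<close> by simp
      next
        case False
        then show ?thesis using adj_S_greater[OF Va b(1)] pj \<open>k = p\<close> by simp
      qed
    next
      case False
      then have "lt k p" using b k I chain_total[of k p] unfolding strict_upset_def by auto
      then have "lt k j" using chain_less_le_trans[of k p j] k I Va pj by (simp add: mem_verts_S)
      then show ?thesis using adj_S_greater[OF Va b(1)] by simp
    qed
  qed
  have "?T' \<subseteq> verts S" unfolding block_def strict_upset_def by blast
  then show ?thesis
    unfolding is_module_def
    using adj_val[of "fst a" "snd a" "fst b" "snd b" for a b] by auto
qed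

lemma strong_module_contains_upset:
  assumes T: "strong_module S T" and px: "(p, x) \<in> T" and qy: "(q, y) \<in> T" and "p \<noteq> q"
  shows "upset p \<subseteq> T"
proof -
  have M: "is_module S T" using T unfolding strong_module_def by blast
  have V: "(p, x) \<in> verts S" "(q, y) \<in> verts S" using px qy strong_module_subset_verts[OF T] by blast+
  then have I: "p \<in> I" "q \<in> I" by (simp_all add: mem_verts_S)
  consider "lt q p" | "lt p q" using chain_total I \<open>p \<noteq> q\<close> by blast
  then show ?thesis
  proof cases
    case 1
    then show ?thesis
      using module_contains_strict_upset[OF M qy px] upset_subset_strict_upset I by blast
  next
    case 2
    have "block p \<subseteq> T"
    proof
      fix z assume z: "z \<in> block p"
      let ?T' = "(block p - T) \<union> strict_upset p"
      have "is_module S ?T'" using module_block_part_Un_strict_upset[OF M qy I(1) 2] .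
      then have "T \<subseteq> ?T' \<or> ?T' \<subseteq> T \<or> T \<inter> ?T' = {}" using T unfolding strong_module_def by blast
      moreover have "(p, x) \<notin> ?T'" "(q, y) \<in> ?T'"
        using V px 2 unfolding block_def strict_upset_def by auto
      ultimately show "z \<in> T" using px qy z by blast
    qed
    then show ?thesis
      using module_contains_strict_upset[OF M px qy 2] upset_eq_block_Un_strict_upset I by blast
  qed
qed

lemma verts_S_pair_sorted:
  assumes "u \<in> verts S" "v \<in> verts S"
  obtains a b where "a \<in> verts S" "b \<in> verts S" "le (fst a) (fst b)" "{u, v} = {a, b}"
proof (cases "le (fst u) (fst v)")
  case True
  then show thesis using that assms by blast
next
  case False
  then have "le (fst v) (fst u)" using assms chain_total fst_mem_verts_S by blast
  then show thesis using that[of v u] assms insert_commute by blast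
qed

lemma least_strong_module_cases:
  assumes ab: "a \<in> verts S" "b \<in> verts S" "le (fst a) (fst b)"
  defines "R \<equiv> \<Inter>{T. strong_module S T \<and> {a, b} \<subseteq> T}"
  shows "R \<subseteq> block (fst a) \<or> R = upset (fst a)"
proof (cases "\<exists>T. strong_module S T \<and> {a, b} \<subseteq> T \<and> T \<subseteq> block (fst a)")
  case True
  then show ?thesis unfolding R_def by blast
next
  case False
  let ?F = "{T. strong_module S T \<and> {a, b} \<subseteq> T}" and ?p = "fst a"
  have p: "?p \<in> I" using ab fst_mem_verts_S by blast
  have "upset ?p \<subseteq> T" if T: "T \<in> ?F" for T
  proof -
    have strong: "strong_module S T" and a: "(?p, snd a) \<in> T" using T by auto
    obtain z where z: "z \<in> T" "z \<notin> block ?p" using T False by blast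
    then have "?p \<noteq> fst z"
      using strong_module_subset_verts[OF strong] unfolding block_def by auto
    moreover have "(fst z, snd z) \<in> T" using z by simp
    ultimately show ?thesis using strong_module_contains_upset[OF strong a] by blast
  qed
  then have "upset ?p \<subseteq> R" unfolding R_def by (rule Inter_greatest)
  moreover have "upset ?p \<in> ?F"
    using ab p upset_strong_module chain_refl[OF p] unfolding upset_def by auto
  then have "R \<subseteq> upset ?p" unfolding R_def by (rule Inter_lower)
  ultimately show ?thesis by blast
qed

lemma robust_module_cases:
  assumes R: "robust_module S R" and ix: "(i, x) \<in> R"
  shows "R \<subseteq> block i \<or> (\<exists>k\<in>I. le k i \<and> R = upset k)"
proof -
  from R consider z where "R = {z}"
    | u v where "u \<in> verts S" "v \<in> verts S" "R = \<Inter>{T. strong_module S T \<and> {u, v} \<subseteq> T}"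
    unfolding robust_module_def by blast
  then show ?thesis
  proof cases
    case 1
    then show ?thesis using ix robust_module_subset_verts[OF R] unfolding block_def by auto
  next
    case (2 u v)
    then obtain a b where ab: "a \<in> verts S" "b \<in> verts S" "le (fst a) (fst b)" "{u, v} = {a, b}"
      using verts_S_pair_sorted by blast
    then have "R \<subseteq> block (fst a) \<or> R = upset (fst a)"
      using least_strong_module_cases[OF ab(1-3)] 2 by simp
    then show ?thesis
    proof
      assume R_block: "R \<subseteq> block (fst a)"
      then have "fst a = i" using ix unfolding block_def by auto
      then show ?thesis using R_block by simp
    next
      assume "R = upset (fst a)"
      moreover have "fst a \<in> I" using ab fst_mem_verts_S by blast
      moreover have "le (fst a) i" using calculation ix by (simp add: mem_upset)
      ultimately show ?thesis by blast
    qed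
  qed
qed

lemma upset_robust_module:
  assumes k: "k \<in> I" and j: "j \<in> I" and kj: "lt k j"
  shows "robust_module S (upset k)"
proof -
  obtain x y where V: "(k, x) \<in> verts S" "(j, y) \<in> verts S"
    using block_vertex k j by metis
  let ?F = "{T. strong_module S T \<and> {(k, x), (j, y)} \<subseteq> T}"
  have "upset k \<in> ?F" using V kj chain_refl[OF k] upset_strong_module[OF k] by (simp add: mem_upset)
  moreover have "upset k \<subseteq> T" if "T \<in> ?F" for T
    using that strong_module_contains_upset[of T k x j y] kj by simp
  ultimately have "upset k = \<Inter>?F" by blast
  then show ?thesis unfolding robust_module_def using V kj by blast
qed

lemma upset_subset_iff: "a \<in> I \<Longrightarrow> b \<in> I \<Longrightarrow> upset b \<subseteq> upset a \<longleftrightarrow> le a b"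
proof
  assume "a \<in> I" "b \<in> I" "upset b \<subseteq> upset a"
  moreover obtain y where "(b, y) \<in> verts S" using block_vertex \<open>b \<in> I\<close> by metis
  moreover have "(b, y) \<in> upset b" using calculation chain_refl[of b] by (simp add: mem_upset)
  ultimately have "(b, y) \<in> upset a" by blast
  then show "le a b" by (simp add: mem_upset)
next
  assume "a \<in> I" "b \<in> I" "le a b"
  then show "upset b \<subseteq> upset a"
    unfolding upset_def using chain_trans fst_mem_verts_S by blast
qed

lemma upset_inj: "a \<in> I \<Longrightarrow> b \<in> I \<Longrightarrow> upset a = upset b \<Longrightarrow> a = b"
  using upset_subset_iff[of a b] upset_subset_iff[of b a] chain_antisym[of a b] by simp

lemma robust_module_subset_lower_upset:
  assumes no_least: "\<forall>i\<in>I. \<exists>k\<in>I. lt k i" and R: "robust_module S R" and ix: "(i, x) \<in> R"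
  obtains k0 where "k0 \<in> I" "lt k0 i" "R \<subseteq> upset k0"
proof -
  have i: "i \<in> I" using ix robust_module_subset_verts[OF R] by (auto simp: mem_verts_S)
  from robust_module_cases[OF R ix] show thesis
  proof (elim disjE bexE conjE)
    assume "R \<subseteq> block i"
    moreover obtain k0 where "k0 \<in> I" "lt k0 i" using no_least i by blast
    moreover have "block i \<subseteq> upset k0"
      using calculation(3) unfolding block_def upset_def by auto
    ultimately show thesis using that by blast
  next
    fix k assume k: "k \<in> I" "le k i" "R = upset k"
    obtain k0 where k0: "k0 \<in> I" "lt k0 k" using no_least k(1) by blast
    then have "lt k0 i" using chain_less_le_trans k i by blast
    moreover have "upset k \<subseteq> upset k0" using upset_subset_iff k0 k by blast
    ultimately show thesis using that k0 k by simp
  qed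
qed

lemma robust_module_containing_upset:
  assumes R: "robust_module S R" and m: "m \<in> I" "j \<in> I" "lt m j" and sub: "upset m \<subseteq> R"
  obtains k where "k \<in> I" "le k m" "R = upset k"
proof -
  obtain x y where V: "(m, x) \<in> verts S" "(j, y) \<in> verts S" using block_vertex m by metis
  then have "(m, x) \<in> R" "(j, y) \<in> R" using sub chain_refl[OF m(1)] m(3) by (auto simp: mem_upset)
  moreover have "(j, y) \<notin> block m" using m(3) unfolding block_def by auto
  ultimately show thesis using robust_module_cases[OF R] that by blast
qed

lemma block_eq_upset_diff:
  assumes k: "k \<in> I" and c: "c \<in> I" and kc: "lt k c"
  shows "block k = upset k - (\<Union>j\<in>{j \<in> I. lt k j \<and> le j c}. upset j)"
proof (intro equalityI subsetI)
  fix z assume z: "z \<in> block k"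
  then have "z \<in> upset k" using chain_refl[OF k] unfolding block_def upset_def by auto
  moreover have "z \<notin> upset j" if "j \<in> I" "lt k j" for j
    using z that k chain_antisym[of k j] unfolding block_def upset_def by auto
  ultimately show "z \<in> upset k - (\<Union>j\<in>{j \<in> I. lt k j \<and> le j c}. upset j)" by blast
next
  fix z assume z: "z \<in> upset k - (\<Union>j\<in>{j \<in> I. lt k j \<and> le j c}. upset j)"
  then have V: "z \<in> verts S" "le k (fst z)" and I: "fst z \<in> I"
    using fst_mem_verts_S unfolding upset_def by auto
  show "z \<in> block k"
  proof (rule ccontr)
    assume "z \<notin> block k"
    then have "lt k (fst z)" using V unfolding block_def by auto
    then have "fst z \<in> {j \<in> I. lt k j \<and> le j c} \<and> z \<in> upset (fst z) \<or>
        c \<in> {j \<in> I. lt k j \<and> le j c} \<and> z \<in> upset c"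
      using V I c kc chain_refl[OF I] chain_refl[OF c] chain_total[OF I c] unfolding upset_def by auto
    then show False using z by blast
  qed
qed

lemma no_least_index:
  assumes "\<not> robust_has_least S"
  shows "\<forall>i\<in>I. \<exists>k\<in>I. lt k i"
proof (rule ccontr)
  assume "\<not> ?thesis"
  then obtain i0 where i0: "i0 \<in> I" "\<forall>j\<in>I. le i0 j" using chain_total by blast
  have "infinite (I - {i0})" using infinite_index by simp
  then obtain j where j: "j \<in> I" "j \<noteq> i0" by (metis Diff_iff ex_in_conv finite.emptyI singletonI)
  have "upset i0 = verts S" using i0 fst_mem_verts_S unfolding upset_def by auto
  then have "robust_module S (verts S)" using upset_robust_module[OF i0(1) j(1)] i0 j by metis
  then have "robust_has_least S"
    unfolding robust_has_least_def using robust_module_subset_verts by blast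
  then show False using assms by contradiction
qed

lemma finite_subset_has_least:
  "finite A \<Longrightarrow> A \<noteq> {} \<Longrightarrow> A \<subseteq> I \<Longrightarrow> \<exists>m\<in>A. \<forall>a\<in>A. le m a"
proof (induction A rule: finite_ne_induct)
  case (singleton x)
  then show ?case using chain_refl by simp
next
  case (insert x F)
  then obtain m where m: "m \<in> F" "\<forall>a\<in>F. le m a" by blast
  have I: "x \<in> I" "m \<in> I" "F \<subseteq> I" using insert m by auto
  show ?case
  proof (cases "le x m")
    case True
    then have "\<forall>a\<in>insert x F. le x a"
      using m I chain_refl[of x] chain_trans[of x m] by blast
    then show ?thesis by blast
  next
    case False
    then show ?thesis using m chain_total[OF I(1,2)] by blast
  qed
qed

lemma infinite_strictly_below:
  assumes no_least: "\<forall>i\<in>I. \<exists>k\<in>I. lt k i" and c: "c \<in> I"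
  shows "infinite {k \<in> I. lt k c}"
proof
  let ?W = "{k \<in> I. lt k c}"
  assume "finite ?W"
  moreover have "?W \<noteq> {}" using no_least c by blast
  ultimately obtain m where m: "m \<in> ?W" "\<forall>a\<in>?W. le m a"
    using finite_subset_has_least by blast
  then obtain k where k: "k \<in> I" "lt k m" using no_least by blast
  then have "k \<in> ?W" using m c chain_less_le_trans[of k m c] by auto
  then show False using m k chain_antisym[of k m] by auto
qed

lemma initial_segment_strictly_below: "c \<in> I \<Longrightarrow> initial_segment I le {k \<in> I. lt k c}"
  unfolding initial_segment_def using chain_le_less_trans by blast

end

section \<open>Isomorphic sums of reduced chains\<close>

locale lchain_sum_iso =
  C: reduced_lchain I le G r + D: reduced_lchain I' le' G' r'
  for I :: "'i set" and le :: "'i \<Rightarrow> 'i \<Rightarrow> bool" and G :: "'i \<Rightarrow> 'v graph" and r :: "'i \<Rightarrow> bool"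
    and I' :: "'j set" and le' :: "'j \<Rightarrow> 'j \<Rightarrow> bool" and G' :: "'j \<Rightarrow> 'w graph" and r' :: "'j \<Rightarrow> bool" +
  fixes f :: "'i \<times> 'v \<Rightarrow> 'j \<times> 'w"
  assumes iso: "graph_isomorphism f (chain_sum I le G r) (chain_sum I' le' G' r')"
begin

lemma bij_f: "bij_betw f (verts C.S) (verts D.S)"
  using graph_isomorphism_bij[OF iso] .

lemma inj_f: "inj_on f (verts C.S)"
  using bij_f by (rule bij_betw_imp_inj_on)

lemma adj_f: "x \<in> verts C.S \<Longrightarrow> y \<in> verts C.S \<Longrightarrow> adj D.S (f x) (f y) = adj C.S x y"
  using iso unfolding graph_isomorphism_def by blast

lemma image_upset_subset_iff:
  assumes "k1 \<in> I" "k2 \<in> I" "k1' \<in> I'" "k2' \<in> I'"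
    and "f ` C.upset k1 = D.upset k1'" "f ` C.upset k2 = D.upset k2'"
  shows "le k1 k2 \<longleftrightarrow> le' k1' k2'"
proof -
  have "le k1 k2 \<longleftrightarrow> C.upset k2 \<subseteq> C.upset k1" using C.upset_subset_iff assms by blast
  also have "\<dots> \<longleftrightarrow> f ` C.upset k2 \<subseteq> f ` C.upset k1"
    using inj_on_image_eq_iff[OF inj_f, of "C.upset k2 \<union> C.upset k1" "C.upset k1"] C.upset_subset_verts
    by (auto simp: image_Un)
  also have "\<dots> \<longleftrightarrow> le' k1' k2'" using D.upset_subset_iff assms by simp
  finally show ?thesis .
qed

lemma upset_image_below:
  assumes k0: "k0 \<in> I" "j0 \<in> I" "C.lt k0 j0" and k0': "k0' \<in> I'" "j0' \<in> I'" "D.lt k0' j0'"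
    and match: "f ` C.upset k0 = D.upset k0'" and k: "k \<in> I" "le k k0"
  obtains k' where "k' \<in> I'" "le' k' k0'" "f ` C.upset k = D.upset k'"
proof -
  have "C.lt k j0" using C.chain_le_less_trans k k0 by blast
  then have "robust_module D.S (f ` C.upset k)"
    using robust_module_image[OF iso] C.upset_robust_module k k0 by blast
  moreover have "D.upset k0' \<subseteq> f ` C.upset k"
    using match image_mono C.upset_subset_iff k k0 by metis
  ultimately show thesis using D.robust_module_containing_upset k0' that by blast
qed

lemma block_image_graph_iso:
  assumes k: "k \<in> I" and k': "k' \<in> I'" and blocks: "f ` C.block k = D.block k'"
  shows "graph_iso (G k) (G' k')"
proof -
  define \<phi> where "\<phi> a = snd (f (k, a))" for a
  have f_block: "f (k, a) = (k', \<phi> a)" "\<phi> a \<in> verts (G' k')" if "a \<in> verts (G k)" for a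
  proof -
    have "(k, a) \<in> C.block k" using that k unfolding C.block_def by (simp add: C.mem_verts_S)
    then have "f (k, a) \<in> D.block k'" using blocks by blast
    then have "(fst (f (k, a)), snd (f (k, a))) \<in> verts D.S" "fst (f (k, a)) = k'"
      unfolding D.block_def by auto
    then show "f (k, a) = (k', \<phi> a)" "\<phi> a \<in> verts (G' k')"
      unfolding \<phi>_def D.mem_verts_S by (simp_all add: prod_eq_iff)
  qed
  have "inj_on \<phi> (verts (G k))"
    using inj_f f_block k unfolding inj_on_def by (metis C.mem_verts_S Pair_inject)
  moreover have "verts (G' k') \<subseteq> \<phi> ` verts (G k)"
  proof
    fix b assume "b \<in> verts (G' k')"
    then have "(k', b) \<in> f ` C.block k" using blocks k' unfolding D.block_def by (simp add: D.mem_verts_S)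
    then obtain a where "a \<in> verts (G k)" "(k', b) = f (k, a)"
      unfolding C.block_def by (auto simp: C.mem_verts_S)
    then show "b \<in> \<phi> ` verts (G k)" using f_block by auto
  qed
  moreover have "adj (G k) a b \<longleftrightarrow> adj (G' k') (\<phi> a) (\<phi> b)"
    if "a \<in> verts (G k)" "b \<in> verts (G k)" for a b
    using that k k' f_block adj_f[of "(k, a)" "(k, b)"]
    by (simp add: C.adj_S_same_block D.adj_S_same_block C.mem_verts_S D.mem_verts_S)
  ultimately show ?thesis
    unfolding graph_iso_def bij_betw_def using f_block by blast
qed

lemma block_image_label:
  assumes k: "k \<in> I" "j \<in> I" "C.lt k j" and k': "k' \<in> I'" "j' \<in> I'" "D.lt k' j'"
    and blocks: "f ` C.block k = D.block k'" and upsets: "f ` C.upset j = D.upset j'"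
  shows "r k = r' k'"
proof -
  obtain a where a: "(k, a) \<in> verts C.S" using C.block_vertex[OF k(1)] .
  obtain b where b: "(j, b) \<in> verts C.S" using C.block_vertex[OF k(2)] .
  obtain k2 a' where fa: "f (k, a) = (k2, a')" by (cases "f (k, a)")
  obtain j2 b' where fb: "f (j, b) = (j2, b')" by (cases "f (j, b)")
  have "(k, a) \<in> C.block k" using a unfolding C.block_def by simp
  then have "(k2, a') \<in> D.block k'" using blocks fa by (metis image_eqI)
  then have a': "(k', a') \<in> verts D.S" "k2 = k'" unfolding D.block_def by auto
  have "(j, b) \<in> C.upset j" using b C.chain_refl[OF k(2)] by (simp add: C.mem_upset)
  then have "(j2, b') \<in> D.upset j'" using upsets fb by (metis image_eqI)
  then have b': "(j2, b') \<in> verts D.S" "le' j' j2" by (simp_all add: D.mem_upset)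
  then have "D.lt k' j2"
    using D.chain_less_le_trans[of k' j' j2] k' by (simp add: D.mem_verts_S)
  then have "adj D.S (f (k, a)) (f (j, b)) = r' k'" using fa fb a' b' D.adj_S_less by simp
  moreover have "adj C.S (k, a) (j, b) = r k" using a b k C.adj_S_less by simp
  ultimately show ?thesis using adj_f a b by simp
qed

definition upsets_match :: "'i \<Rightarrow> ('i \<Rightarrow> 'j) \<Rightarrow> bool" where
  "upsets_match k0 \<sigma> \<longleftrightarrow> k0 \<in> I \<and>
     \<sigma> ` {k \<in> I. le k k0} = {k' \<in> I'. le' k' (\<sigma> k0)} \<and>
     (\<forall>k\<in>I. le k k0 \<longrightarrow> f ` C.upset k = D.upset (\<sigma> k))"

lemma upsets_match_upset:
  "upsets_match k0 \<sigma> \<Longrightarrow> k \<in> I \<Longrightarrow> le k k0 \<Longrightarrow> f ` C.upset k = D.upset (\<sigma> k)"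
  unfolding upsets_match_def by simp

lemma upsets_match_maps_to:
  assumes m: "upsets_match k0 \<sigma>" and k: "k \<in> I" "le k k0"
  shows "\<sigma> k \<in> I'" "le' (\<sigma> k) (\<sigma> k0)"
proof -
  have "\<sigma> k \<in> \<sigma> ` {k \<in> I. le k k0}" using k by simp
  then show "\<sigma> k \<in> I'" "le' (\<sigma> k) (\<sigma> k0)" using m unfolding upsets_match_def by simp_all
qed

lemma upsets_match_onto:
  assumes m: "upsets_match k0 \<sigma>" and k': "k' \<in> I'" "le' k' (\<sigma> k0)"
  obtains k where "k \<in> I" "le k k0" "\<sigma> k = k'"
proof -
  have "k' \<in> \<sigma> ` {k \<in> I. le k k0}" using m k' unfolding upsets_match_def by simp
  then show thesis using that by blast
qed

lemma upsets_match_le_iff: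
  assumes m: "upsets_match k0 \<sigma>" and a: "a \<in> I" "le a k0" and b: "b \<in> I" "le b k0"
  shows "le a b \<longleftrightarrow> le' (\<sigma> a) (\<sigma> b)"
proof -
  have "\<sigma> a \<in> I'" "\<sigma> b \<in> I'" using upsets_match_maps_to(1)[OF m] a b by simp_all
  then show ?thesis
    using image_upset_subset_iff a b upsets_match_upset[OF m a] upsets_match_upset[OF m b] by blast
qed

lemma upsets_match_inj:
  assumes m: "upsets_match k0 \<sigma>"
  shows "inj_on \<sigma> {k \<in> I. le k k0}"
proof (rule inj_onI)
  fix a b assume a: "a \<in> {k \<in> I. le k k0}" and b: "b \<in> {k \<in> I. le k k0}" and "\<sigma> a = \<sigma> b"
  moreover have "\<sigma> a \<in> I'" using upsets_match_maps_to(1)[OF m] a by simp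
  ultimately show "a = b"
    using upsets_match_le_iff[OF m, of a b] upsets_match_le_iff[OF m, of b a]
      D.chain_refl[of "\<sigma> a"] C.chain_antisym[of a b] by simp
qed

lemma upsets_match_less_iff:
  assumes m: "upsets_match k0 \<sigma>" and "a \<in> I" "le a k0" "b \<in> I" "le b k0"
  shows "C.lt a b \<longleftrightarrow> D.lt (\<sigma> a) (\<sigma> b)"
  using assms upsets_match_le_iff[OF m] upsets_match_inj[OF m] unfolding inj_on_def by blast

lemma upsets_match_block_image:
  assumes m: "upsets_match k0 \<sigma>" and k: "k \<in> I" "C.lt k k0"
  shows "f ` C.block k = D.block (\<sigma> k)"
proof -
  let ?J = "{j \<in> I. C.lt k j \<and> le j k0}" and ?J' = "{j' \<in> I'. D.lt (\<sigma> k) j' \<and> le' j' (\<sigma> k0)}"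
  have k0: "k0 \<in> I" using m unfolding upsets_match_def by simp
  have k0_refl: "le k0 k0" using C.chain_refl[OF k0] .
  note up = upsets_match_upset[OF m]
  note \<sigma>I = upsets_match_maps_to(1)[OF m]
  note lt_iff = upsets_match_less_iff[OF m]
  have "\<sigma> ` ?J = ?J'"
  proof
    show "\<sigma> ` ?J \<subseteq> ?J'" using lt_iff upsets_match_le_iff[OF m] k k0 k0_refl \<sigma>I by auto
    show "?J' \<subseteq> \<sigma> ` ?J"
    proof
      fix j' assume j': "j' \<in> ?J'"
      then obtain j where "j \<in> I" "le j k0" "\<sigma> j = j'" using upsets_match_onto[OF m] by blast
      then show "j' \<in> \<sigma> ` ?J" using j' lt_iff k by auto
    qed
  qed
  have "f ` C.block k = f ` (C.upset k - (\<Union>j\<in>?J. C.upset j))"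
    using C.block_eq_upset_diff[OF k(1) k0 k(2)] by simp
  also have "\<dots> = f ` C.upset k - f ` (\<Union>j\<in>?J. C.upset j)"
    by (rule inj_on_image_set_diff[OF inj_f]) (use C.upset_subset_verts in blast)+
  also have "\<dots> = f ` C.upset k - (\<Union>j\<in>?J. f ` C.upset j)"
    by (simp only: image_UN)
  also have "\<dots> = D.upset (\<sigma> k) - (\<Union>j'\<in>\<sigma> ` ?J. D.upset j')"
    using up k by simp
  also have "\<dots> = D.block (\<sigma> k)"
  proof -
    have "D.lt (\<sigma> k) (\<sigma> k0)" using lt_iff[OF k(1) _ k0 k0_refl] k by simp
    then show ?thesis
      using D.block_eq_upset_diff[OF \<sigma>I \<sigma>I] \<open>\<sigma> ` ?J = ?J'\<close> k k0 k0_refl by simp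
  qed
  finally show ?thesis .
qed

lemma exists_matching_upsets:
  assumes no_least: "\<forall>i\<in>I. \<exists>k\<in>I. C.lt k i" and no_least': "\<forall>i\<in>I'. \<exists>k\<in>I'. D.lt k i"
  obtains k0 j0 k0' j0' where "k0 \<in> I" "j0 \<in> I" "C.lt k0 j0" "k0' \<in> I'" "j0' \<in> I'" "D.lt k0' j0'"
    "f ` C.upset k0 = D.upset k0'"
proof -
  let ?g = "inv_into (verts C.S) f"
  obtain i where i: "i \<in> I" using C.infinite_index by (metis ex_in_conv finite.emptyI)
  then obtain x where v: "(i, x) \<in> verts C.S" using C.block_vertex by metis
  obtain i' x' where fv: "f (i, x) = (i', x')" by (cases "f (i, x)")
  have v': "(i', x') \<in> verts D.S" using bij_betwE[OF bij_f] v fv by metis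
  then have i': "i' \<in> I'" by (simp add: D.mem_verts_S)
  obtain k1' where k1': "k1' \<in> I'" "D.lt k1' i'" using no_least' i' by blast
  let ?R = "?g ` D.upset k1'"
  have R: "robust_module C.S ?R"
    using robust_module_image[OF graph_isomorphism_inv[OF iso]] D.upset_robust_module[OF k1'(1) i' k1'(2)]
    by simp
  have "(i', x') \<in> D.upset k1'" using v' k1' by (simp add: D.mem_upset)
  then have "(i, x) \<in> ?R" using inv_into_f_f[OF inj_f v] fv by (metis image_eqI)
  obtain k0 where k0: "k0 \<in> I" "C.lt k0 i" "?R \<subseteq> C.upset k0"
    using C.robust_module_subset_lower_upset[OF no_least R \<open>(i, x) \<in> ?R\<close>] .
  have "f ` ?R = D.upset k1'"
    using graph_isomorphism_image_inv_into[OF iso D.upset_subset_verts] .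
  then have "D.upset k1' \<subseteq> f ` C.upset k0" using k0(3) image_mono by metis
  moreover have "robust_module D.S (f ` C.upset k0)"
    using robust_module_image[OF iso] C.upset_robust_module[OF k0(1) i k0(2)] .
  ultimately obtain k0' where k0': "k0' \<in> I'" "le' k0' k1'" "f ` C.upset k0 = D.upset k0'"
    using D.robust_module_containing_upset[OF _ k1'(1) i' k1'(2)] by metis
  moreover have "D.lt k0' i'" using D.chain_le_less_trans k0' k1' i' by blast
  ultimately show thesis using that k0(1,2) i i' by blast
qed

lemma exists_upsets_match:
  assumes k0: "k0 \<in> I" "j0 \<in> I" "C.lt k0 j0" and k0': "k0' \<in> I'" "j0' \<in> I'" "D.lt k0' j0'"
    and match: "f ` C.upset k0 = D.upset k0'"
  shows "\<exists>\<sigma>. upsets_match k0 \<sigma>"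
proof -
  let ?g = "inv_into (verts C.S) f"
  define \<sigma> where "\<sigma> k = (THE k'. k' \<in> I' \<and> f ` C.upset k = D.upset k')" for k
  have \<sigma>: "\<sigma> k \<in> I' \<and> le' (\<sigma> k) k0' \<and> f ` C.upset k = D.upset (\<sigma> k)" if k: "k \<in> I" "le k k0" for k
  proof -
    obtain k' where k': "k' \<in> I'" "le' k' k0'" "f ` C.upset k = D.upset k'"
      using upset_image_below[OF k0 k0' match k] .
    then have "\<sigma> k = k'"
      unfolding \<sigma>_def using D.upset_inj by (intro the_equality) auto
    then show ?thesis using k' by simp
  qed
  have "\<sigma> k0 = k0'" using \<sigma>[OF k0(1) C.chain_refl[OF k0(1)]] match D.upset_inj k0'(1) by metis
  have "{k' \<in> I'. le' k' k0'} \<subseteq> \<sigma> ` {k \<in> I. le k k0}"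
  proof
    fix k' assume k': "k' \<in> {k' \<in> I'. le' k' k0'}"
    have g_iso: "graph_isomorphism ?g D.S C.S" using graph_isomorphism_inv[OF iso] .
    interpret inverse: lchain_sum_iso I' le' G' r' I le G r ?g
      using D.reduced_lchain_axioms C.reduced_lchain_axioms g_iso
      by (simp add: lchain_sum_iso_def lchain_sum_iso_axioms_def)
    have "?g ` D.upset k0' = C.upset k0"
      using match[symmetric] C.upset_subset_verts inj_f by (simp add: inv_into_image_cancel)
    then obtain k where k: "k \<in> I" "le k k0" "?g ` D.upset k' = C.upset k"
      using inverse.upset_image_below[OF k0' k0] k' by blast
    then have "f ` C.upset k = D.upset k'"
      using graph_isomorphism_image_inv_into[OF iso D.upset_subset_verts] by metis
    then have "\<sigma> k = k'" using \<sigma>[OF k(1,2)] D.upset_inj k' by auto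
    then show "k' \<in> \<sigma> ` {k \<in> I. le k k0}" using k by blast
  qed
  then have "\<sigma> ` {k \<in> I. le k k0} = {k' \<in> I'. le' k' (\<sigma> k0)}"
    using \<sigma> \<open>\<sigma> k0 = k0'\<close> by auto
  then show ?thesis unfolding upsets_match_def using k0(1) \<sigma> by blast
qed

lemma upsets_match_lchain_iso:
  assumes m: "upsets_match k0 \<sigma>"
  shows "lchain_iso {k \<in> I. C.lt k k0} le G r {k' \<in> I'. D.lt k' (\<sigma> k0)} le' G' r' \<sigma>"
proof -
  let ?W = "{k \<in> I. C.lt k k0}" and ?W' = "{k' \<in> I'. D.lt k' (\<sigma> k0)}"
  have k0: "k0 \<in> I" "le k0 k0" using m C.chain_refl unfolding upsets_match_def by simp_all
  note less_iff = upsets_match_less_iff[OF m _ _ k0]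
  have "\<sigma> ` ?W = ?W'"
  proof
    show "\<sigma> ` ?W \<subseteq> ?W'" using less_iff upsets_match_maps_to(1)[OF m] by auto
    show "?W' \<subseteq> \<sigma> ` ?W"
    proof
      fix k' assume k': "k' \<in> ?W'"
      then obtain k where "k \<in> I" "le k k0" "\<sigma> k = k'" using upsets_match_onto[OF m] by blast
      then show "k' \<in> \<sigma> ` ?W" using k' less_iff by auto
    qed
  qed
  then have "bij_betw \<sigma> ?W ?W'"
    using upsets_match_inj[OF m] unfolding bij_betw_def by (auto intro: inj_on_subset)
  moreover have "graph_iso (G k) (G' (\<sigma> k)) \<and> r k = r' (\<sigma> k)" if k: "k \<in> ?W" for k
  proof -
    have blocks: "f ` C.block k = D.block (\<sigma> k)" using upsets_match_block_image[OF m] k by blast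
    have "\<sigma> k \<in> I'" "\<sigma> k0 \<in> I'" "D.lt (\<sigma> k) (\<sigma> k0)"
      using upsets_match_maps_to(1)[OF m] less_iff k k0 by auto
    then show ?thesis
      using block_image_graph_iso[OF _ _ blocks] block_image_label[OF _ _ _ _ _ _ blocks]
        upsets_match_upset[OF m k0] k k0 by auto
  qed
  ultimately show ?thesis
    unfolding lchain_iso_def using upsets_match_le_iff[OF m] by auto
qed

lemma initial_segments_iso:
  assumes "\<forall>i\<in>I. \<exists>k\<in>I. C.lt k i" and "\<forall>i\<in>I'. \<exists>k\<in>I'. D.lt k i"
  shows "\<exists>W W' h. initial_segment I le W \<and> infinite W \<and>
                  initial_segment I' le' W' \<and> infinite W' \<and>
                  lchain_iso W le G r W' le' G' r' h"
proof -
  obtain k0 \<sigma> where m: "upsets_match k0 \<sigma>"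
    using exists_matching_upsets[OF assms] exists_upsets_match by metis
  let ?W = "{k \<in> I. C.lt k k0}" and ?W' = "{k' \<in> I'. D.lt k' (\<sigma> k0)}"
  have k0: "k0 \<in> I" "\<sigma> k0 \<in> I'"
    using m upsets_match_maps_to(1)[OF m] C.chain_refl unfolding upsets_match_def by auto
  have iso: "lchain_iso ?W le G r ?W' le' G' r' \<sigma>" using upsets_match_lchain_iso[OF m] .
  have "infinite ?W" using C.infinite_strictly_below assms(1) k0(1) by blast
  moreover have "infinite ?W'"
    using calculation iso bij_betw_finite unfolding lchain_iso_def by blast
  ultimately show ?thesis
    using iso C.initial_segment_strictly_below D.initial_segment_strictly_below k0 by blast
qed

end

theorem lemma2p6:
  fixes Gr :: "'a graph" and Gr' :: "'b graph"
    and I :: "'i set" and le :: "'i \<Rightarrow> 'i \<Rightarrow> bool" and G :: "'i \<Rightarrow> 'v graph" and r :: "'i \<Rightarrow> bool"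
    and I' :: "'j set" and le' :: "'j \<Rightarrow> 'j \<Rightarrow> bool" and G' :: "'j \<Rightarrow> 'w graph" and r' :: "'j \<Rightarrow> bool"
  assumes "cograph Gr" and "cograph Gr'" and "graph_iso Gr Gr'"
    and "\<not> robust_has_least Gr" and "\<not> robust_has_least Gr'"
    and "labelled_chain I le G r" and "reduced_chain I le G r"
    and "labelled_chain I' le' G' r'" and "reduced_chain I' le' G' r'"
    and "graph_iso Gr (chain_sum I le G r)" and "graph_iso Gr' (chain_sum I' le' G' r')"
  shows "\<exists>W W' h. initial_segment I le W \<and> infinite W \<and>
                  initial_segment I' le' W' \<and> infinite W' \<and>
                  lchain_iso W le G r W' le' G' r' h"
proof -
  interpret C: reduced_lchain I le G r using assms(6,7) by (rule reduced_lchain.intro)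
  interpret D: reduced_lchain I' le' G' r' using assms(8,9) by (rule reduced_lchain.intro)
  obtain f1 f2 f3 where f1: "graph_isomorphism f1 Gr C.S" and f2: "graph_isomorphism f2 Gr Gr'"
    and f3: "graph_isomorphism f3 Gr' D.S"
    using assms(3,10,11) graph_iso_iff_isomorphism by metis
  let ?f = "f3 \<circ> f2 \<circ> inv_into (verts Gr) f1"
  have "graph_isomorphism ?f C.S D.S"
    using graph_isomorphism_comp[OF graph_isomorphism_comp[OF graph_isomorphism_inv[OF f1] f2] f3]
    by (simp add: comp_assoc)
  then interpret lchain_sum_iso I le G r I' le' G' r' ?f
    by (simp add: lchain_sum_iso_def lchain_sum_iso_axioms_def C.reduced_lchain_axioms D.reduced_lchain_axioms)
  have "\<not> robust_has_least C.S" "\<not> robust_has_least D.S"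
    using robust_has_least_image[OF graph_isomorphism_inv[OF f1]]
      robust_has_least_image[OF graph_isomorphism_inv[OF f3]] assms(4,5) by blast+
  then show ?thesis using initial_segments_iso C.no_least_index D.no_least_index by blast
qed

end
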